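(* In the negative-fill variable-processor cup game against a greedy emptier, suppose that at the beginning of some round all fills are (possibly negative) half-integers (integer multiples of $1/2$). Let $k\in\mathbb Z$ and $q\in\mathbb N$, $q\ge1$, and suppose at least $2q$ cups have fill exactly $k/2$. Then the filler can ensure that at the end of the round exactly $q$ of the cups of fill $k/2$ have fill $(k+1)/2$, exactly $q$ of the cups of fill $k/2$ have fill $(k-1)/2$, and all other cups are unchanged.
   Context: Negative-fill variable-processor cup game on $n$ cups: real fills; each round the filler chooses an integer $1\le p\le n$ and reals $a_i\in[0,1]$ with $\sum a_i=p$ and adds $a_i$ to cup $i$; then the emptier chooses $p$ distinct cups and subtracts exactly $1$ from each. The greedy emptier subtracts from the $p$ fullest cups after the filler's move (ties broken arbitrarily). *)

theory Defs
  imports Complex_Main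
begin

text \<open>Cups are indexed by {..<n}; a configuration is a function nat => real
  (values at indices >= n are irrelevant).\<close>

definition valid_filler_move :: "nat \<Rightarrow> nat \<Rightarrow> (nat \<Rightarrow> real) \<Rightarrow> bool" where
  "valid_filler_move n p a \<longleftrightarrow> 1 \<le> p \<and> p \<le> n \<and>
     (\<forall>i<n. 0 \<le> a i \<and> a i \<le> 1) \<and> (\<Sum>i<n. a i) = real p"

definition after_fill :: "(nat \<Rightarrow> real) \<Rightarrow> (nat \<Rightarrow> real) \<Rightarrow> nat \<Rightarrow> real" where
  "after_fill x a = (\<lambda>i. x i + a i)"

definition greedy_choice :: "nat \<Rightarrow> (nat \<Rightarrow> real) \<Rightarrow> nat \<Rightarrow> nat set \<Rightarrow> bool" where
  "greedy_choice n y p S \<longleftrightarrow> S \<subseteq> {..<n} \<and> card S = p \<and>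
     (\<forall>i\<in>S. \<forall>j\<in>{..<n} - S. y j \<le> y i)"

definition empty_cups :: "(nat \<Rightarrow> real) \<Rightarrow> nat set \<Rightarrow> nat \<Rightarrow> real" where
  "empty_cups y S = (\<lambda>i. if i \<in> S then y i - 1 else y i)"

end

theory Submission
  imports Defs
begin

text \<open>Let \<open>H\<close> be the cups strictly above \<open>k/2\<close> and \<open>D\<close> any \<open>2q\<close> cups at \<open>k/2\<close>. With
  \<open>p = |H| + q\<close> processors the filler adds \<open>1\<close> to each cup of \<open>H\<close> and \<open>1/2\<close> to each cup
  of \<open>D\<close>. Afterwards the cups of \<open>H\<close> are strictly above those of \<open>D\<close> (now at \<open>(k+1)/2\<close>),
  which are strictly above all others, so the greedy emptier takes all of \<open>H\<close> (undoing
  their fill) and exactly \<open>q\<close> cups of \<open>D\<close>, which drop to \<open>(k-1)/2\<close>; the other \<open>q\<close> cups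
  of \<open>D\<close> keep fill \<open>(k+1)/2\<close>. Only the order of the fills relative to \<open>k/2\<close> matters.\<close>

lemma greedy_choice_contains_top:
  assumes S: "greedy_choice n y p S"
    and T: "T \<subseteq> {..<n}" "card T \<le> p"
    and above: "\<forall>i\<in>T. \<forall>j\<in>{..<n} - T. y j < y i"
  shows "T \<subseteq> S"
proof
  fix t assume t: "t \<in> T"
  show "t \<in> S"
  proof (rule ccontr)
    assume "t \<notin> S"
    have "S \<subseteq> T - {t}"
    proof
      fix i assume i: "i \<in> S"
      with S t T(1) \<open>t \<notin> S\<close> have "y t \<le> y i" unfolding greedy_choice_def by blast
      with above t i S show "i \<in> T - {t}"
        unfolding greedy_choice_def by (metis Diff_iff \<open>t \<notin> S\<close> leD singletonD subsetD)
    qed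
    moreover have "finite T" using T(1) finite_subset by blast
    ultimately have "card S < card T"
      using t by (meson card_Diff1_less card_mono finite_Diff le_less_trans)
    with S T(2) show False unfolding greedy_choice_def by simp
  qed
qed

lemma greedy_choice_within_top:
  assumes S: "greedy_choice n y p S"
    and T: "T \<subseteq> {..<n}" "p \<le> card T"
    and above: "\<forall>i\<in>T. \<forall>j\<in>{..<n} - T. y j < y i"
  shows "S \<subseteq> T"
proof
  fix s assume s: "s \<in> S"
  show "s \<in> T"
  proof (rule ccontr)
    assume "s \<notin> T"
    have "T \<subseteq> S"
    proof
      fix t assume t: "t \<in> T"
      with s \<open>s \<notin> T\<close> S above have "y s < y t" unfolding greedy_choice_def by blast
      with s t S T(1) show "t \<in> S" unfolding greedy_choice_def by (meson Diff_iff leD subsetD)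
    qed
    with s have "insert s T \<subseteq> S" by blast
    moreover have "finite S" using S finite_subset unfolding greedy_choice_def by blast
    ultimately have "card (insert s T) \<le> card S" by (simp add: card_mono)
    moreover have "finite T" using T(1) finite_subset by blast
    ultimately show False
      using S T(2) \<open>s \<notin> T\<close> unfolding greedy_choice_def by simp
  qed
qed

definition split_fill :: "nat set \<Rightarrow> nat set \<Rightarrow> nat \<Rightarrow> real" where
  "split_fill H D = (\<lambda>i. if i \<in> H then 1 else if i \<in> D then 1/2 else 0)"

lemma sum_split_fill:
  assumes "H \<inter> D = {}" "H \<union> D \<subseteq> U" "finite U"
  shows "(\<Sum>i\<in>U. split_fill H D i) = card H + card D / 2"
proof -
  have fin: "finite H" "finite D" using assms(2,3) finite_subset by auto
  have "(\<Sum>i\<in>U. split_fill H D i) = (\<Sum>i\<in>H \<union> D. split_fill H D i)"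
    using assms(2,3) by (intro sum.mono_neutral_right) (auto simp: split_fill_def)
  also have "\<dots> = (\<Sum>i\<in>H. split_fill H D i) + (\<Sum>i\<in>D. split_fill H D i)"
    using fin assms(1) by (rule sum.union_disjoint)
  also have "\<dots> = (\<Sum>i\<in>H. 1) + (\<Sum>i\<in>D. 1/2)"
    using assms(1) by (intro arg_cong2[where f = "(+)"] sum.cong) (auto simp: split_fill_def)
  finally show ?thesis by simp
qed

lemma valid_filler_move_split_fill:
  assumes "H \<inter> D = {}" "H \<union> D \<subseteq> {..<n}" "card D = 2 * q" "1 \<le> q"
  shows "valid_filler_move n (card H + q) (split_fill H D)"
proof -
  have "finite H" "finite D" using assms(2) finite_subset by auto
  then have "card H + card D = card (H \<union> D)" using assms(1) by (simp add: card_Un_disjoint)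
  also have "\<dots> \<le> n" using card_mono[OF _ assms(2)] by simp
  finally have "card H + card D \<le> n" .
  with assms show ?thesis
    unfolding valid_filler_move_def by (simp add: sum_split_fill) (simp add: split_fill_def)
qed

lemma greedy_choice_after_split_fill:
  fixes c :: real
  assumes S: "greedy_choice n (after_fill x (split_fill H D)) (card H + q) S"
    and H: "H = {i. i < n \<and> c < x i}"
    and D: "D \<subseteq> {i. i < n \<and> x i = c}" "card D = 2 * q"
  obtains B where "B \<subseteq> D" "card B = q" "S = H \<union> B"
proof -
  let ?y = "after_fill x (split_fill H D)"
  have HD: "H \<inter> D = {}" using H D(1) by auto
  have fin: "finite H" "finite D" using H D(1) by (auto intro: finite_subset)
  have y_H: "c + 1 < ?y i" if "i \<in> H" for i
    using that H by (simp add: after_fill_def split_fill_def)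
  have y_D: "?y i = c + 1/2" if "i \<in> D" for i
    using that HD D(1) by (auto simp: after_fill_def split_fill_def)
  have y_rest: "?y i \<le> c" if "i \<in> {..<n} - (H \<union> D)" for i
    using that H by (auto simp: after_fill_def split_fill_def not_less)
  have "H \<subseteq> S"
  proof (rule greedy_choice_contains_top[OF S])
    show "\<forall>i\<in>H. \<forall>j\<in>{..<n} - H. ?y j < ?y i"
    proof (intro ballI)
      fix i j assume "i \<in> H" "j \<in> {..<n} - H"
      then show "?y j < ?y i"
        using y_H[of i] y_D[of j] y_rest[of j] by (cases "j \<in> D") auto
    qed
  qed (use H in auto)
  moreover have "S \<subseteq> H \<union> D"
  proof (rule greedy_choice_within_top[OF S])
    show "\<forall>i\<in>H \<union> D. \<forall>j\<in>{..<n} - (H \<union> D). ?y j < ?y i"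
      using y_H y_D y_rest by fastforce
    show "card H + q \<le> card (H \<union> D)"
      using HD fin D(2) by (simp add: card_Un_disjoint)
  qed (use H D in auto)
  ultimately have S_eq: "S = H \<union> (S \<inter> D)" by blast
  have "card S = card H + card (S \<inter> D)"
    using HD fin by (subst S_eq, subst card_Un_disjoint) auto
  with S have "card (S \<inter> D) = q" unfolding greedy_choice_def by simp
  with S_eq show thesis by (intro that) auto
qed

lemma empty_cups_after_split_fill:
  assumes "H \<inter> D = {}" "B \<subseteq> D"
  shows "empty_cups (after_fill x (split_fill H D)) (H \<union> B) i =
           (if i \<in> B then x i - 1/2 else if i \<in> D then x i + 1/2 else x i)"
  using assms by (auto simp: empty_cups_def after_fill_def split_fill_def)

theorem lemma5p3:
  fixes n :: nat and x :: "nat \<Rightarrow> real" and k :: int and q :: nat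
  assumes half_int: "\<forall>i<n. \<exists>m::int. x i = real_of_int m / 2"
    and q_pos: "1 \<le> q"
    and many: "2 * q \<le> card {i. i < n \<and> x i = real_of_int k / 2}"
  shows "\<exists>p a. valid_filler_move n p a \<and>
           (\<forall>S. greedy_choice n (after_fill x a) p S \<longrightarrow>
              (let z = empty_cups (after_fill x a) S in
               \<exists>A B. A \<subseteq> {i. i < n \<and> x i = real_of_int k / 2} \<and>
                     B \<subseteq> {i. i < n \<and> x i = real_of_int k / 2} \<and>
                     A \<inter> B = {} \<and> card A = q \<and> card B = q \<and>
                     (\<forall>i\<in>A. z i = real_of_int (k + 1) / 2) \<and>
                     (\<forall>i\<in>B. z i = real_of_int (k - 1) / 2) \<and>
                     (\<forall>i<n. i \<notin> A \<union> B \<longrightarrow> z i = x i)))"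
proof -
  define C where "C = {i. i < n \<and> x i = real_of_int k / 2}"
  define H where "H = {i. i < n \<and> real_of_int k / 2 < x i}"
  obtain D where DC: "D \<subseteq> C" and card_D: "card D = 2 * q"
    using obtain_subset_with_card_n[of "2 * q" C] many C_def by auto
  have HD: "H \<inter> D = {}" and HD_n: "H \<union> D \<subseteq> {..<n}"
    using DC unfolding C_def H_def by auto
  have "\<exists>A B. A \<subseteq> C \<and> B \<subseteq> C \<and> A \<inter> B = {} \<and> card A = q \<and> card B = q \<and>
          (\<forall>i\<in>A. z i = real_of_int (k + 1) / 2) \<and> (\<forall>i\<in>B. z i = real_of_int (k - 1) / 2) \<and>
          (\<forall>i<n. i \<notin> A \<union> B \<longrightarrow> z i = x i)"
    if S: "greedy_choice n (after_fill x (split_fill H D)) (card H + q) S"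
      and z: "z = empty_cups (after_fill x (split_fill H D)) S" for S z
  proof -
    obtain B where B: "B \<subseteq> D" "card B = q" "S = H \<union> B"
      using greedy_choice_after_split_fill[OF S H_def _ card_D] DC unfolding C_def by blast
    have "finite D" using HD_n finite_subset by blast
    then have "card (D - B) = q" using B card_D by (simp add: card_Diff_subset finite_subset)
    with B DC HD show ?thesis
      unfolding z by (intro exI[of _ "D - B"] exI[of _ B])
        (auto simp: empty_cups_after_split_fill C_def)
  qed
  with valid_filler_move_split_fill[OF HD HD_n card_D q_pos] show ?thesis
    unfolding C_def Let_def by blast
qed

end
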